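(* Let $G$ be a graph. For every $A\subseteq V(G)$ let $\operatorname{mm}(A)$ denote the maximum cardinality of a matching in the bipartite graph $G[A,V(G)\setminus A]$. Then $\operatorname{mm}$ is submodular: for all $A,B\subseteq V(G)$, $$\operatorname{mm}(A)+\operatorname{mm}(B)\ \ge\ \operatorname{mm}(A\cup B)+\operatorname{mm}(A\cap B).$$
   Context: Graphs are finite, simple and undirected. For disjoint $A,B\subseteq V(G)$, $G[A,B]$ denotes the bipartite graph with vertex set $A\cup B$ and edge set $\{uv\in E(G): u\in A, v\in B\}$. *)

theory Defs
  imports Main
begin

definition simple_graph :: "'a set \<Rightarrow> 'a set set \<Rightarrow> bool" where
  "simple_graph V E \<longleftrightarrow> finite V \<and> (\<forall>e\<in>E. \<exists>u v. u \<in> V \<and> v \<in> V \<and> u \<noteq> v \<and> e = {u, v})"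

definition bip_edges :: "'a set set \<Rightarrow> 'a set \<Rightarrow> 'a set \<Rightarrow> 'a set set" where
  "bip_edges E A B = {e \<in> E. \<exists>u v. u \<in> A \<and> v \<in> B \<and> e = {u, v}}"

definition matching :: "'a set set \<Rightarrow> bool" where
  "matching M \<longleftrightarrow> (\<forall>e1\<in>M. \<forall>e2\<in>M. e1 \<noteq> e2 \<longrightarrow> e1 \<inter> e2 = {})"

definition mm :: "'a set \<Rightarrow> 'a set set \<Rightarrow> 'a set \<Rightarrow> nat" where
  "mm V E A = Max {card M | M. M \<subseteq> bip_edges E A (V - A) \<and> matching M}"

end

theory Submission imports Defs begin

(* The proof goes through a min-max (Koenig-type) description of mm.  Call a pair (S, T) with
   S \<subseteq> A, T \<subseteq> V - A and no edge between S and T a separated pair for A.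
   (1) Every matching of G[A, V - A] meets V - (S \<union> T) in distinct vertices, hence
       mm(A) + |S| + |T| \<le> |V| for every separated pair.
   (2) Conversely some separated pair attains |V| \<le> mm(A) + |S| + |T|.  This follows from the
       deficiency version of Hall's theorem applied to the neighbourhoods N(x) \<subseteq> V - A, x \<in> A:
       taking S of maximal deficiency and T = (V - A) - N(S).
   Given optimal pairs (S1, T1) for A and (S2, T2) for B, the pairs (S1 \<union> S2, T1 \<inter> T2) and
   (S1 \<inter> S2, T1 \<union> T2) are separated for A \<union> B and A \<inter> B; adding the two bounds of (1) and
   using |X| + |Y| = |X \<union> Y| + |X \<inter> Y| yields the theorem. *)

section \<open>Hall's theorem\<close>

definition hall_condition :: "'a set \<Rightarrow> ('a \<Rightarrow> 'b set) \<Rightarrow> bool" where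
  "hall_condition X N \<longleftrightarrow> (\<forall>S\<subseteq>X. card S \<le> card (\<Union>(N ` S)))"

definition sdr :: "'a set \<Rightarrow> ('a \<Rightarrow> 'b set) \<Rightarrow> ('a \<Rightarrow> 'b) \<Rightarrow> bool" where
  "sdr X N f \<longleftrightarrow> inj_on f X \<and> (\<forall>x\<in>X. f x \<in> N x)"

lemma sdr_glue:
  assumes f1: "sdr S N f1" and f2: "sdr (X - S) (\<lambda>x. N x - \<Union>(N ` S)) f2" and "S \<subseteq> X"
  shows "sdr X N (\<lambda>x. if x \<in> S then f1 x else f2 x)" (is "sdr X N ?f")
proof -
  have "?f ` S \<subseteq> \<Union>(N ` S)" using f1 unfolding sdr_def by auto
  moreover have "?f ` (X - S) \<inter> \<Union>(N ` S) = {}" using f2 unfolding sdr_def by auto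
  moreover have "inj_on ?f S" "inj_on ?f (X - S)"
    using f1 f2 unfolding sdr_def by (auto simp: inj_on_def)
  ultimately have "inj_on ?f (S \<union> (X - S))" unfolding inj_on_Un by blast
  moreover have "S \<union> (X - S) = X" using \<open>S \<subseteq> X\<close> by blast
  ultimately show ?thesis using f1 f2 unfolding sdr_def by auto
qed

lemma hall_condition_remove_critical:
  assumes hall: "hall_condition X N" and S: "S \<subseteq> X" "card (\<Union>(N ` S)) = card S"
    and fin: "finite X" "\<forall>x\<in>X. finite (N x)"
  shows "hall_condition (X - S) (\<lambda>x. N x - \<Union>(N ` S))"
  unfolding hall_condition_def
proof (intro allI impI)
  fix T assume T: "T \<subseteq> X - S"
  let ?NS = "\<Union>(N ` S)" and ?NTS = "\<Union>(N ` (T \<union> S))"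
  have fin_TS: "finite T" "finite S" using T S fin by (auto intro: finite_subset)
  have "T \<union> S \<subseteq> X" using T S by blast
  then have fin_NTS: "finite ?NTS" using fin_TS fin by (simp add: subset_iff)
  have sub: "?NS \<subseteq> ?NTS" by blast
  have "card T + card S = card (T \<union> S)"
    using T fin_TS by (subst card_Un_disjoint) auto
  also have "\<dots> \<le> card ?NTS"
    using hall \<open>T \<union> S \<subseteq> X\<close> unfolding hall_condition_def by blast
  also have "\<dots> = card (?NTS - ?NS) + card ?NS"
    using card_Diff_subset[OF finite_subset[OF sub fin_NTS] sub] card_mono[OF fin_NTS sub]
    by linarith
  also have "?NTS - ?NS = \<Union>((\<lambda>x. N x - ?NS) ` T)" by blast
  finally show "card T \<le> card (\<Union>((\<lambda>x. N x - \<Union>(N ` S)) ` T))" using S(2) by linarith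
qed

lemma hall_condition_delete:
  assumes strict: "\<forall>T\<subseteq>X. T \<noteq> {} \<longrightarrow> card T < card (\<Union>(N ` T))"
    and fin: "finite X" "\<forall>x\<in>X. finite (N x)"
  shows "hall_condition X (\<lambda>x. N x - {y})"
  unfolding hall_condition_def
proof (intro allI impI)
  fix T assume T: "T \<subseteq> X"
  show "card T \<le> card (\<Union>((\<lambda>x. N x - {y}) ` T))"
  proof (cases "T = {}")
    case False
    have "finite T" using T fin by (auto intro: finite_subset)
    then have "finite (\<Union>(N ` T))" using T fin by (simp add: subset_iff)
    then have "card (\<Union>(N ` T)) \<le> card (\<Union>(N ` T) - {y}) + 1"
      by (metis card_Diff_singleton_if le_diff_conv le_iff_add le_refl)
    moreover have "card T < card (\<Union>(N ` T))" using strict T False by blast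
    moreover have "\<Union>((\<lambda>x. N x - {y}) ` T) = \<Union>(N ` T) - {y}" by blast
    ultimately show ?thesis by simp
  qed simp
qed

lemma sdr_extend:
  assumes f: "sdr (X - {x}) (\<lambda>z. N z - {y}) f" and y: "y \<in> N x"
  shows "sdr X N (f(x := y))"
proof -
  have "inj_on (f(x := y)) (X - {x})" "y \<notin> f ` (X - {x})"
    using f unfolding sdr_def by (auto simp: inj_on_def)
  then have "inj_on (f(x := y)) (insert x (X - {x}))" unfolding inj_on_insert by simp
  then have "inj_on (f(x := y)) X" by (rule inj_on_subset) blast
  then show ?thesis using f y unfolding sdr_def by auto
qed

text \<open>Hall's marriage theorem for a finite family of finite sets (Halmos-Vaughan proof by
  induction on the size of the family, splitting at a critical subfamily if there is one).\<close>
theorem hall: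
  assumes "finite X" "\<forall>x\<in>X. finite (N x)" "hall_condition X N"
  shows "\<exists>f. sdr X N f"
  using assms
proof (induction "card X" arbitrary: X N rule: less_induct)
  case less
  note fin = less.prems(1,2) and hall = less.prems(3)
  have IH: "\<exists>f. sdr Y M f"
    if "card Y < card X" "finite Y" "\<forall>x\<in>Y. finite (M x)" "hall_condition Y M"
    for Y :: "'a set" and M :: "'a \<Rightarrow> 'b set"
    by (rule less.hyps[OF that])
  show ?case
  proof (cases "\<exists>S. S \<subseteq> X \<and> S \<noteq> {} \<and> S \<noteq> X \<and> card (\<Union>(N ` S)) = card S")
    case True
    \<comment> \<open>A proper critical subfamily S: match S and X - S separately and glue.\<close>
    then obtain S where S: "S \<subseteq> X" "S \<noteq> {}" "S \<noteq> X" "card (\<Union>(N ` S)) = card S" by blast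
    have "finite S" using S(1) fin(1) by (rule finite_subset)
    have "card S < card X" using S(1,3) fin(1) by (simp add: psubset_card_mono)
    moreover have "\<forall>x\<in>S. finite (N x)" using S(1) fin(2) by blast
    moreover have "hall_condition S N" using hall S(1) unfolding hall_condition_def by auto
    ultimately obtain f1 where "sdr S N f1" using IH \<open>finite S\<close> by blast
    have "X - S \<subset> X" using S(1,2) by blast
    then have "card (X - S) < card X" using fin(1) by (rule psubset_card_mono[rotated])
    moreover have "finite (X - S)" using fin(1) by simp
    moreover have "\<forall>x\<in>X - S. finite (N x - \<Union>(N ` S))" using fin(2) by simp
    moreover have "hall_condition (X - S) (\<lambda>x. N x - \<Union>(N ` S))"
      using hall_condition_remove_critical[OF hall S(1,4) fin] .
    ultimately obtain f2 where "sdr (X - S) (\<lambda>x. N x - \<Union>(N ` S)) f2" by (metis IH)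
    then show ?thesis using sdr_glue \<open>sdr S N f1\<close> S(1) by blast
  next
    case no_critical: False
    \<comment> \<open>Hall's condition holds strictly: represent some x by any y \<in> N x, delete y.\<close>
    show ?thesis
    proof (cases "X = {}")
      case False
      then obtain x where x: "x \<in> X" by blast
      have "card {x} \<le> card (\<Union>(N ` {x}))" using hall x unfolding hall_condition_def by blast
      then have "N x \<noteq> {}" by auto
      then obtain y where y: "y \<in> N x" by blast
      have strict: "\<forall>T\<subseteq>X - {x}. T \<noteq> {} \<longrightarrow> card T < card (\<Union>(N ` T))"
      proof (intro allI impI)
        fix T assume T: "T \<subseteq> X - {x}" and "T \<noteq> {}"
        then have "T \<subseteq> X" "T \<noteq> X" using x by auto
        then have "card T \<le> card (\<Union>(N ` T))" "card (\<Union>(N ` T)) \<noteq> card T"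
          using hall no_critical \<open>T \<noteq> {}\<close> unfolding hall_condition_def by blast+
        then show "card T < card (\<Union>(N ` T))" by linarith
      qed
      have fin': "finite (X - {x})" "\<forall>z\<in>X - {x}. finite (N z)" using fin by simp_all
      then have "hall_condition (X - {x}) (\<lambda>z. N z - {y})"
        by (rule hall_condition_delete[OF strict])
      moreover have "card (X - {x}) < card X" using x fin(1) by (rule card_Diff1_less[rotated])
      moreover have "\<forall>z\<in>X - {x}. finite (N z - {y})" using fin(2) by simp
      ultimately obtain f where "sdr (X - {x}) (\<lambda>z. N z - {y}) f" using IH fin'(1) by metis
      then have "sdr X N (f(x := y))" using y by (rule sdr_extend)
      then show ?thesis by blast
    qed (intro exI, simp add: sdr_def)
  qed
qed

text \<open>Proof: pad every set by
  d fresh elements and apply Hall's theorem.\<close>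
lemma hall_defect:
  assumes fin: "finite X" "\<forall>x\<in>X. finite (N x)"
    and defect: "\<forall>S\<subseteq>X. card S \<le> card (\<Union>(N ` S)) + d"
  shows "\<exists>X'\<subseteq>X. \<exists>g. sdr X' N g \<and> card X \<le> card X' + d"
proof -
  define N' where "N' x = Inl ` N x \<union> Inr ` {..<d}" for x
  have "hall_condition X N'" unfolding hall_condition_def
  proof (intro allI impI)
    fix S assume S: "S \<subseteq> X"
    show "card S \<le> card (\<Union>(N' ` S))"
    proof (cases "S = {}")
      case False
      have "finite S" using S fin(1) by (rule finite_subset)
      then have "finite (\<Union>(N ` S))" using S fin(2) by (simp add: subset_iff)
      then have "card (Inl ` \<Union>(N ` S) \<union> Inr ` {..<d}) = card (\<Union>(N ` S)) + d"
        by (subst card_Un_disjoint) (auto simp: card_image)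
      moreover have "\<Union>(N' ` S) = Inl ` \<Union>(N ` S) \<union> Inr ` {..<d}"
        using False unfolding N'_def by blast
      ultimately have "card (\<Union>(N' ` S)) = card (\<Union>(N ` S)) + d" by simp
      then show ?thesis using defect S by simp
    qed simp
  qed
  moreover have "\<forall>x\<in>X. finite (N' x)" using fin(2) unfolding N'_def by simp
  ultimately obtain f where f: "inj_on f X" "\<forall>x\<in>X. f x \<in> N' x"
    using hall[OF fin(1)] unfolding sdr_def by blast
  define X' where "X' = {x\<in>X. isl (f x)}"
  have X'X: "X' \<subseteq> X" unfolding X'_def by blast
  have f_Inl: "f x = Inl (projl (f x))" if "x \<in> X'" for x
    using that unfolding X'_def by simp
  have "inj_on (projl \<circ> f) X'"
  proof (rule inj_onI)
    fix x y assume xy: "x \<in> X'" "y \<in> X'" "(projl \<circ> f) x = (projl \<circ> f) y"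
    then have "f x = f y" using f_Inl by (metis comp_apply)
    then show "x = y" using f(1) xy X'X by (auto dest: inj_onD)
  qed
  moreover have "(projl \<circ> f) x \<in> N x" if "x \<in> X'" for x
  proof -
    have "Inl (projl (f x)) \<in> N' x" using f(2) that X'X f_Inl[OF that] by auto
    then show ?thesis unfolding N'_def by auto
  qed
  ultimately have "sdr X' N (projl \<circ> f)" unfolding sdr_def by blast
  have "card (X - X') \<le> d"
  proof -
    have "f ` (X - X') \<subseteq> Inr ` {..<d}" using f(2) unfolding X'_def N'_def by auto
    have "inj_on f (X - X')" using f(1) by (rule inj_on_subset) blast
    then have "card (X - X') = card (f ` (X - X'))" by (rule card_image[symmetric])
    also have "\<dots> \<le> card (Inr ` {..<d} :: ('b + nat) set)" using calculation
      by (intro card_mono) (use \<open>f ` (X - X') \<subseteq> Inr ` {..<d}\<close> in auto)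
    also have "\<dots> = d" by (simp add: card_image)
    finally show ?thesis .
  qed
  moreover have "card X = card X' + card (X - X')"
    using card_Diff_subset[OF finite_subset[OF X'X fin(1)] X'X] card_mono[OF fin(1) X'X] by linarith
  ultimately show ?thesis using X'X \<open>sdr X' N (projl \<circ> f)\<close> by auto
qed

text \<open>Deficiency version of Hall's theorem (Ore): some subfamily S and partial SDR on X'
  satisfy card X - card X' \<le> card S - card N(S).  S is chosen of maximal deficiency.\<close>
lemma hall_deficiency:
  assumes fin: "finite X" "\<forall>x\<in>X. finite (N x)"
  shows "\<exists>S\<subseteq>X. \<exists>X'\<subseteq>X. \<exists>g. sdr X' N g \<and> card X + card (\<Union>(N ` S)) \<le> card X' + card S"
proof -
  define deficiency where "deficiency S = int (card S) - int (card (\<Union>(N ` S)))" for S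
  obtain S where S: "S \<in> Pow X" "Max (deficiency ` Pow X) = deficiency S"
    using obtains_MAX[of "Pow X" deficiency] fin(1) by auto
  have max: "deficiency T \<le> deficiency S" if "T \<subseteq> X" for T
  proof -
    have "deficiency T \<le> Max (deficiency ` Pow X)" using that fin(1) by (intro Max_ge) auto
    then show ?thesis using S(2) by simp
  qed
  have "deficiency {} = 0" unfolding deficiency_def by simp
  then have "deficiency S \<ge> 0" using max[of "{}"] by simp
  define d where "d = nat (deficiency S)"
  have d: "int d = deficiency S" unfolding d_def using \<open>deficiency S \<ge> 0\<close> by simp
  have defect: "\<forall>T\<subseteq>X. card T \<le> card (\<Union>(N ` T)) + d"
  proof (intro allI impI)
    fix T assume "T \<subseteq> X"
    then have "deficiency T \<le> int d" using max d by simp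
    then show "card T \<le> card (\<Union>(N ` T)) + d" unfolding deficiency_def by linarith
  qed
  obtain X' g where "X' \<subseteq> X" "sdr X' N g" "card X \<le> card X' + d"
    using hall_defect[OF fin defect] by blast
  moreover have "card S = card (\<Union>(N ` S)) + d" using d unfolding deficiency_def by linarith
  ultimately have "card X + card (\<Union>(N ` S)) \<le> card X' + card S" by linarith
  then show ?thesis using S(1) \<open>X' \<subseteq> X\<close> \<open>sdr X' N g\<close> by blast
qed

section \<open>Matchings across a cut\<close>

lemma simple_graph_finite:
  assumes "simple_graph V E"
  shows "finite V" "finite E"
proof -
  show "finite V" using assms unfolding simple_graph_def by blast
  have "E \<subseteq> Pow V" using assms unfolding simple_graph_def by auto
  then show "finite E" using finite_subset \<open>finite V\<close> by blast
qed

lemma mm_bounds: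
  assumes "simple_graph V E"
  shows mm_upper: "\<And>M. M \<subseteq> bip_edges E A (V - A) \<Longrightarrow> matching M \<Longrightarrow> card M \<le> mm V E A"
    and mm_attained: "\<exists>M. M \<subseteq> bip_edges E A (V - A) \<and> matching M \<and> card M = mm V E A"
proof -
  let ?K = "{card M | M. M \<subseteq> bip_edges E A (V - A) \<and> matching M}"
  have "bip_edges E A (V - A) \<subseteq> E" unfolding bip_edges_def by blast
  then have "finite (bip_edges E A (V - A))"
    using simple_graph_finite(2)[OF assms] by (rule finite_subset)
  moreover have "?K \<subseteq> card ` Pow (bip_edges E A (V - A))" by blast
  ultimately have fin: "finite ?K" by (simp add: finite_subset)
  show "card M \<le> mm V E A" if "M \<subseteq> bip_edges E A (V - A)" "matching M" for M
    unfolding mm_def using fin that by (intro Max_ge) blast+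
  have "card {} \<in> ?K" unfolding matching_def by (auto intro!: exI[of _ "{}"])
  then have "Max ?K \<in> ?K" using fin by (intro Max_in) blast+
  then show "\<exists>M. M \<subseteq> bip_edges E A (V - A) \<and> matching M \<and> card M = mm V E A"
    unfolding mm_def by auto
qed

lemma matching_card_le_transversal:
  assumes "matching M" "finite C" "\<forall>e\<in>M. e \<inter> C \<noteq> {}"
  shows "card M \<le> card C"
proof -
  define h where "h e = (SOME w. w \<in> e \<inter> C)" for e
  have h: "h e \<in> e \<inter> C" if "e \<in> M" for e
  proof -
    have "\<exists>w. w \<in> e \<inter> C" using assms(3) that by blast
    then show ?thesis unfolding h_def by (rule someI_ex)
  qed
  have inj: "inj_on h M"
  proof (rule inj_onI)
    fix e1 e2 assume e: "e1 \<in> M" "e2 \<in> M" "h e1 = h e2"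
    then have "h e1 \<in> e1 \<inter> e2" using h[OF e(1)] h[OF e(2)] by simp
    then show "e1 = e2" using assms(1) e(1,2) unfolding matching_def by blast
  qed
  have "h ` M \<subseteq> C" using h by blast
  then show ?thesis by (rule card_inj_on_le[OF inj _ assms(2)])
qed

definition separated :: "'a set set \<Rightarrow> 'a set \<Rightarrow> 'a set \<Rightarrow> bool" where
  "separated E S T \<longleftrightarrow> (\<forall>u\<in>S. \<forall>v\<in>T. {u, v} \<notin> E)"

text \<open>Easy direction of the min-max formula: V - (S \<union> T) covers every cut edge.\<close>
lemma mm_separated_le:
  assumes G: "simple_graph V E" and A: "A \<subseteq> V" and S: "S \<subseteq> A" and T: "T \<subseteq> V - A"
    and sep: "separated E S T"
  shows "mm V E A + card S + card T \<le> card V"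
proof -
  obtain M where M: "M \<subseteq> bip_edges E A (V - A)" "matching M" "card M = mm V E A"
    using mm_attained[OF G] by blast
  have finV: "finite V" using simple_graph_finite(1)[OF G] .
  have "\<forall>e\<in>M. e \<inter> (V - (S \<union> T)) \<noteq> {}"
  proof
    fix e assume "e \<in> M"
    then obtain u v where uv: "u \<in> A" "v \<in> V - A" "e = {u, v}" "{u, v} \<in> E"
      using M(1) unfolding bip_edges_def by blast
    have "u \<in> V - (S \<union> T) \<or> v \<in> V - (S \<union> T)"
    proof (cases "u \<in> S")
      case True
      then have "v \<notin> T" using sep uv(4) unfolding separated_def by blast
      then show ?thesis using uv(2) S by blast
    qed (use uv(1) A T in blast)
    then show "e \<inter> (V - (S \<union> T)) \<noteq> {}" using uv(3) by blast
  qed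
  then have "mm V E A \<le> card (V - (S \<union> T))"
    using matching_card_le_transversal[OF M(2)] finV M(3) by simp
  moreover have "S \<union> T \<subseteq> V" using A S T by blast
  then have "card (V - (S \<union> T)) + card (S \<union> T) = card V"
    using finV by (metis card_Diff_subset card_mono finite_subset le_add_diff_inverse2)
  moreover have "card (S \<union> T) = card S + card T"
    using \<open>S \<union> T \<subseteq> V\<close> S T finV by (intro card_Un_disjoint) (auto intro: finite_subset)
  ultimately show ?thesis by linarith
qed

lemma sdr_matching:
  assumes g: "sdr X' (\<lambda>x. {y \<in> V - A. {x, y} \<in> E}) g" and X': "X' \<subseteq> A"
  shows "(\<lambda>x. {x, g x}) ` X' \<subseteq> bip_edges E A (V - A)"
    and "matching ((\<lambda>x. {x, g x}) ` X')"
    and "card ((\<lambda>x. {x, g x}) ` X') = card X'"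
proof -
  have g_out: "g x \<in> V - A" "{x, g x} \<in> E" if "x \<in> X'" for x
    using g that unfolding sdr_def by auto
  have inj: "inj_on g X'" using g unfolding sdr_def by blast
  have distinct: "x \<noteq> g y" if "x \<in> X'" "y \<in> X'" for x y
    using g_out(1)[OF that(2)] that(1) X' by blast
  show "(\<lambda>x. {x, g x}) ` X' \<subseteq> bip_edges E A (V - A)"
    using g_out X' unfolding bip_edges_def by blast
  show "matching ((\<lambda>x. {x, g x}) ` X')"
    unfolding matching_def
  proof (intro ballI impI)
    fix e1 e2 assume "e1 \<in> (\<lambda>x. {x, g x}) ` X'" "e2 \<in> (\<lambda>x. {x, g x}) ` X'" "e1 \<noteq> e2"
    then obtain x y where xy: "x \<in> X'" "y \<in> X'" "e1 = {x, g x}" "e2 = {y, g y}" "x \<noteq> y"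
      by blast
    then have "g x \<noteq> g y" using inj by (auto dest: inj_onD)
    then show "e1 \<inter> e2 = {}" using xy distinct by auto
  qed
  have "inj_on (\<lambda>x. {x, g x}) X'"
  proof (rule inj_onI)
    fix x y assume xy: "x \<in> X'" "y \<in> X'" "{x, g x} = {y, g y}"
    then show "x = y" using distinct[OF xy(1,2)] by (auto simp: doubleton_eq_iff)
  qed
  then show "card ((\<lambda>x. {x, g x}) ` X') = card X'" by (rule card_image)
qed

text \<open>Hard direction of the min-max formula (Koenig): some separated pair is tight.
  Take S of maximal deficiency in the family of neighbourhoods and T = (V - A) - N(S).\<close>
lemma mm_separated_attained:
  assumes G: "simple_graph V E" and AV: "A \<subseteq> V"
  shows "\<exists>S\<subseteq>A. \<exists>T\<subseteq>V - A. separated E S T \<and> card V \<le> mm V E A + card S + card T"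
proof -
  have finV: "finite V" using simple_graph_finite(1)[OF G] .
  define N where "N x = {y \<in> V - A. {x, y} \<in> E}" for x
  have "finite A" using AV finV by (rule finite_subset)
  moreover have "\<forall>x\<in>A. finite (N x)" using finV unfolding N_def by simp
  ultimately obtain S X' g where S: "S \<subseteq> A" "X' \<subseteq> A" "sdr X' N g"
      and count: "card A + card (\<Union>(N ` S)) \<le> card X' + card S"
    using hall_deficiency[of A N] by blast
  define T where "T = (V - A) - \<Union>(N ` S)"
  have sep: "separated E S T" unfolding separated_def T_def N_def by blast
  have NS: "\<Union>(N ` S) \<subseteq> V - A" unfolding N_def by blast
  have "card X' \<le> mm V E A"
    using sdr_matching[OF S(3)[unfolded N_def] S(2)] mm_upper[OF G] by metis
  moreover have "card T + card (\<Union>(N ` S)) = card (V - A)"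
    unfolding T_def using NS finV
    by (metis card_Diff_subset card_mono finite_Diff finite_subset le_add_diff_inverse2)
  moreover have "card (V - A) + card A = card V"
    using AV finV by (metis card_Diff_subset card_mono finite_subset le_add_diff_inverse2)
  ultimately have "card V \<le> mm V E A + card S + card T" using count by linarith
  moreover have "T \<subseteq> V - A" unfolding T_def by blast
  ultimately show ?thesis using S(1) sep by blast
qed

section \<open>Submodularity\<close>

lemma separated_union_inter:
  assumes "S1 \<subseteq> A" "T1 \<subseteq> V - A" "separated E S1 T1"
    and "S2 \<subseteq> B" "T2 \<subseteq> V - B" "separated E S2 T2"
  shows "S1 \<union> S2 \<subseteq> A \<union> B" "T1 \<inter> T2 \<subseteq> V - (A \<union> B)" "separated E (S1 \<union> S2) (T1 \<inter> T2)"
    and "S1 \<inter> S2 \<subseteq> A \<inter> B" "T1 \<union> T2 \<subseteq> V - (A \<inter> B)" "separated E (S1 \<inter> S2) (T1 \<union> T2)"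
  using assms unfolding separated_def by blast+

theorem theorem3:
  fixes V :: "'a set" and E :: "'a set set" and A B :: "'a set"
  assumes "simple_graph V E"
    and "A \<subseteq> V" and "B \<subseteq> V"
  shows "mm V E A + mm V E B \<ge> mm V E (A \<union> B) + mm V E (A \<inter> B)"
proof -
  obtain S1 T1 where 1: "S1 \<subseteq> A" "T1 \<subseteq> V - A" "separated E S1 T1"
      "card V \<le> mm V E A + card S1 + card T1"
    using mm_separated_attained[OF assms(1,2)] by blast
  obtain S2 T2 where 2: "S2 \<subseteq> B" "T2 \<subseteq> V - B" "separated E S2 T2"
      "card V \<le> mm V E B + card S2 + card T2"
    using mm_separated_attained[OF assms(1,3)] by blast
  note pairs = separated_union_inter[OF 1(1-3) 2(1-3)]
  have "A \<union> B \<subseteq> V" "A \<inter> B \<subseteq> V" using assms(2,3) by blast+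
  then have "mm V E (A \<union> B) + card (S1 \<union> S2) + card (T1 \<inter> T2) \<le> card V"
    and "mm V E (A \<inter> B) + card (S1 \<inter> S2) + card (T1 \<union> T2) \<le> card V"
    using mm_separated_le[OF assms(1) _ pairs(1-3)] mm_separated_le[OF assms(1) _ pairs(4-6)]
    by simp_all
  moreover have fin: "finite S1" "finite S2" "finite T1" "finite T2"
    using assms(2,3) 1(1,2) 2(1,2) simple_graph_finite(1)[OF assms(1)]
    by (meson Diff_subset finite_subset subset_trans)+
  moreover note card_Un_Int[OF fin(1,2)] card_Un_Int[OF fin(3,4)]
  ultimately show ?thesis using 1(4) 2(4) by linarith
qed

end
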